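(* In the setting described in the context, for every $\boldsymbol{y},\boldsymbol{y}'\in\mathbb{S}_+$, $k\in\mathbb{Z}_+$ and $l\in S_0$, we have $r^{(1)}_{\boldsymbol{y},(k,l)}=r^{(1)}_{\boldsymbol{y}',(k,l)}$ and $r^{(2)}_{\boldsymbol{y},(k,l)}=r^{(2)}_{\boldsymbol{y}',(k,l)}$.
   Context: Let $S_0=\{1,\dots,s_0\}$ be finite and $\{\boldsymbol{Y}_n\}=\{(X_{1,n},X_{2,n},J_n)\}$ a Markov chain on $\mathbb{S}=\mathbb{Z}^2\times S_0$ with $\mathbb{P}(\boldsymbol{Y}_{n+1}=(x_1+k,x_2+l,j')\mid\boldsymbol{Y}_n=(x_1,x_2,j))=[A_{k,l}]_{j,j'}$ for $k,l\in\{-1,0,1\}$ (no other transitions), where $A_{k,l}$ are nonnegative $s_0\times s_0$ matrices with $\sum A_{k,l}$ stochastic. Let $\mathbb{S}_+=\mathbb{Z}_+^2\times S_0$, $P_+$ the restriction of the transition matrix to $\mathbb{S}_+$, $\tau=\inf\{n\ge0:\boldsymbol{Y}_n\notin\mathbb{S}_+\}$, $\tilde q_{\boldsymbol{y},\boldsymbol{y}'}=\mathbb{E}\big(\sum_{n=0}^{\tau-1}1(\boldsymbol{Y}_n=\boldsymbol{y}')\mid\boldsymbol{Y}_0=\boldsymbol{y}\big)$. With $\boldsymbol\pi_{*,*}$ the stationary distribution of $\sum A_{k,l}$, let $a_1=\boldsymbol{\pi}_{*,*}\sum_l(A_{1,l}-A_{-1,l})\mathbf{1}$, $a_2=\boldsymbol{\pi}_{*,*}\sum_k(A_{k,1}-A_{k,-1})\mathbf{1}$.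 Standing assumptions: $\{\boldsymbol Y_n\}$ irreducible and aperiodic; $a_1<0$ or $a_2<0$; $P_+$ irreducible. For $\boldsymbol{y}\in\mathbb{S}_+$, $x_1',x_2'\in\mathbb{Z}_+$, $j'\in S_0$, define $\hat\varphi^{(1)}_{\boldsymbol{y},(x_2',j')}(z)=\sum_{k\ge0}\tilde q_{\boldsymbol{y},(k,x_2',j')}z^k$ and $\hat\varphi^{(2)}_{\boldsymbol{y},(x_1',j')}(z)=\sum_{k\ge0}\tilde q_{\boldsymbol{y},(x_1',k,j')}z^k$, and let $r^{(1)}_{\boldsymbol{y},(x_2',j')}$ and $r^{(2)}_{\boldsymbol{y},(x_1',j')}$ be their radii of convergence, i.e. $\sup\{r\ge0:\hat\varphi(r)<\infty\}$. *)

theory Defs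
  imports "HOL-Analysis.Analysis"
begin

text \<open>States of the Markov chain: (x1, x2, j) with x1, x2 integers and j a phase in
  the finite nonempty type 'j (playing the role of S0 = {1..s0}).
  A k l j j' is the entry [A_{k,l}]_{j,j'} for k, l in {-1,0,1}.\<close>

type_synonym 'j st = "int \<times> int \<times> 'j"

definition steps :: "int set" where "steps = {-1, 0, 1}"

definition trans_prob :: "(int \<Rightarrow> int \<Rightarrow> 'j \<Rightarrow> 'j \<Rightarrow> real) \<Rightarrow> 'j st \<Rightarrow> 'j st \<Rightarrow> real" where
  "trans_prob A y y' =
     (case y of (x1, x2, j) \<Rightarrow> case y' of (x1', x2', j') \<Rightarrow>
        if x1' - x1 \<in> steps \<and> x2' - x2 \<in> steps then A (x1' - x1) (x2' - x2) j j' else 0)"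

definition preds :: "'j st \<Rightarrow> 'j st set" where
  "preds y' = {(fst y' - a, fst (snd y') - b, j) | a b j. a \<in> steps \<and> b \<in> steps}"

definition Splus :: "'j st set" where
  "Splus = {(x1, x2, j). 0 \<le> x1 \<and> 0 \<le> x2}"

fun nstep :: "(int \<Rightarrow> int \<Rightarrow> 'j::finite \<Rightarrow> 'j \<Rightarrow> real) \<Rightarrow> nat \<Rightarrow> 'j st \<Rightarrow> 'j st \<Rightarrow> real" where
  "nstep A 0 y y' = (if y = y' then 1 else 0)"
| "nstep A (Suc n) y y' = (\<Sum>y''\<in>preds y'. nstep A n y y'' * trans_prob A y'' y')"

text \<open>n-step transition probabilities of P_+ (the restriction of P to S_+), i.e. the
  taboo probabilities P(Y_n = y', n < tau | Y_0 = y) for y, y' in S_+.\<close>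
fun nstep_plus :: "(int \<Rightarrow> int \<Rightarrow> 'j::finite \<Rightarrow> 'j \<Rightarrow> real) \<Rightarrow> nat \<Rightarrow> 'j st \<Rightarrow> 'j st \<Rightarrow> real" where
  "nstep_plus A 0 y y' = (if y = y' \<and> y \<in> Splus then 1 else 0)"
| "nstep_plus A (Suc n) y y' =
     (if y' \<in> Splus then (\<Sum>y''\<in>preds y' \<inter> Splus. nstep_plus A n y y'' * trans_prob A y'' y') else 0)"

text \<open>Expected number of visits to y' before leaving S_+, starting from y:
  E(sum_{n<tau} 1(Y_n = y')) = sum_n P(Y_n = y', n < tau), valued in [0, infinity].\<close>
definition qtilde :: "(int \<Rightarrow> int \<Rightarrow> 'j::finite \<Rightarrow> 'j \<Rightarrow> real) \<Rightarrow> 'j st \<Rightarrow> 'j st \<Rightarrow> ennreal" where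
  "qtilde A y y' = (\<Sum>n. ennreal (nstep_plus A n y y'))"

definition phi1 :: "(int \<Rightarrow> int \<Rightarrow> 'j::finite \<Rightarrow> 'j \<Rightarrow> real) \<Rightarrow> 'j st \<Rightarrow> int \<Rightarrow> 'j \<Rightarrow> ennreal \<Rightarrow> ennreal" where
  "phi1 A y x2' j' z = (\<Sum>k. qtilde A y (int k, x2', j') * z ^ k)"

definition phi2 :: "(int \<Rightarrow> int \<Rightarrow> 'j::finite \<Rightarrow> 'j \<Rightarrow> real) \<Rightarrow> 'j st \<Rightarrow> int \<Rightarrow> 'j \<Rightarrow> ennreal \<Rightarrow> ennreal" where
  "phi2 A y x1' j' z = (\<Sum>k. qtilde A y (x1', int k, j') * z ^ k)"

definition r1 :: "(int \<Rightarrow> int \<Rightarrow> 'j::finite \<Rightarrow> 'j \<Rightarrow> real) \<Rightarrow> 'j st \<Rightarrow> int \<Rightarrow> 'j \<Rightarrow> ennreal" where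
  "r1 A y x2' j' = Sup {ennreal r | r. 0 \<le> r \<and> phi1 A y x2' j' (ennreal r) < top}"

definition r2 :: "(int \<Rightarrow> int \<Rightarrow> 'j::finite \<Rightarrow> 'j \<Rightarrow> real) \<Rightarrow> 'j st \<Rightarrow> int \<Rightarrow> 'j \<Rightarrow> ennreal" where
  "r2 A y x1' j' = Sup {ennreal r | r. 0 \<le> r \<and> phi2 A y x1' j' (ennreal r) < top}"

definition Astar :: "(int \<Rightarrow> int \<Rightarrow> 'j::finite \<Rightarrow> 'j \<Rightarrow> real) \<Rightarrow> 'j \<Rightarrow> 'j \<Rightarrow> real" where
  "Astar A j j' = (\<Sum>k\<in>steps. \<Sum>l\<in>steps. A k l j j')"

definition stationary_dist :: "(int \<Rightarrow> int \<Rightarrow> 'j::finite \<Rightarrow> 'j \<Rightarrow> real) \<Rightarrow> ('j \<Rightarrow> real) \<Rightarrow> bool" where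
  "stationary_dist A \<pi> \<longleftrightarrow> (\<forall>j. 0 \<le> \<pi> j) \<and> (\<Sum>j\<in>UNIV. \<pi> j) = 1 \<and>
     (\<forall>j'. (\<Sum>j\<in>UNIV. \<pi> j * Astar A j j') = \<pi> j')"

definition drift1 :: "(int \<Rightarrow> int \<Rightarrow> 'j::finite \<Rightarrow> 'j \<Rightarrow> real) \<Rightarrow> ('j \<Rightarrow> real) \<Rightarrow> real" where
  "drift1 A \<pi> = (\<Sum>j\<in>UNIV. \<pi> j * (\<Sum>l\<in>steps. \<Sum>j'\<in>UNIV. A 1 l j j' - A (-1) l j j'))"

definition drift2 :: "(int \<Rightarrow> int \<Rightarrow> 'j::finite \<Rightarrow> 'j \<Rightarrow> real) \<Rightarrow> ('j \<Rightarrow> real) \<Rightarrow> real" where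
  "drift2 A \<pi> = (\<Sum>j\<in>UNIV. \<pi> j * (\<Sum>k\<in>steps. \<Sum>j'\<in>UNIV. A k 1 j j' - A k (-1) j j'))"

definition valid_blocks :: "(int \<Rightarrow> int \<Rightarrow> 'j::finite \<Rightarrow> 'j \<Rightarrow> real) \<Rightarrow> bool" where
  "valid_blocks A \<longleftrightarrow> (\<forall>k\<in>steps. \<forall>l\<in>steps. \<forall>j j'. 0 \<le> A k l j j') \<and>
     (\<forall>j. (\<Sum>j'\<in>UNIV. Astar A j j') = 1)"

definition irreducible_chain :: "(int \<Rightarrow> int \<Rightarrow> 'j::finite \<Rightarrow> 'j \<Rightarrow> real) \<Rightarrow> bool" where
  "irreducible_chain A \<longleftrightarrow> (\<forall>y y'. \<exists>n. 0 < nstep A n y y')"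

definition aperiodic_chain :: "(int \<Rightarrow> int \<Rightarrow> 'j::finite \<Rightarrow> 'j \<Rightarrow> real) \<Rightarrow> bool" where
  "aperiodic_chain A \<longleftrightarrow> (\<forall>y. Gcd {n. 0 < n \<and> 0 < nstep A n y y} = 1)"

definition irreducible_plus :: "(int \<Rightarrow> int \<Rightarrow> 'j::finite \<Rightarrow> 'j \<Rightarrow> real) \<Rightarrow> bool" where
  "irreducible_plus A \<longleftrightarrow> (\<forall>y\<in>Splus. \<forall>y'\<in>Splus. \<exists>n. 0 < nstep_plus A n y y')"

end

theory Submission
  imports Defs
begin

text \<open>Reaching v from y inside S_+ with positive probability c in n steps gives
  c q(v, w) \<le> q(y, w) for every w (Chapman-Kolmogorov for the taboo probabilities),
  hence c phi_v \<le> phi_y coefficientwise, so phi_v is finite wherever phi_y is and the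
  radius at y is at most the radius at v. Irreducibility of P_+ gives the reverse
  inequality.\<close>

lemma trans_prob_nonneg:
  assumes "valid_blocks A"
  shows "0 \<le> trans_prob A u w"
  using assms unfolding valid_blocks_def trans_prob_def
  by (auto split: prod.splits)

lemma nstep_plus_nonneg:
  assumes "valid_blocks A"
  shows "0 \<le> nstep_plus A m v w"
proof (induction m arbitrary: w)
  case 0
  then show ?case by simp
next
  case (Suc m)
  then show ?case
    using trans_prob_nonneg[OF assms] by (simp add: sum_nonneg)
qed

lemma nstep_plus_mult_le:
  assumes "valid_blocks A"
  shows "nstep_plus A n y v * nstep_plus A m v w \<le> nstep_plus A (n + m) y w"
proof (induction m arbitrary: w)
  case 0
  then show ?case using nstep_plus_nonneg[OF assms] by auto
next
  case (Suc m)
  show ?case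
  proof (cases "w \<in> Splus")
    case False
    then show ?thesis by simp
  next
    case True
    have "nstep_plus A n y v * nstep_plus A (Suc m) v w =
        (\<Sum>u\<in>preds w \<inter> Splus. (nstep_plus A n y v * nstep_plus A m v u) * trans_prob A u w)"
      using True by (simp add: sum_distrib_left mult.assoc)
    also have "\<dots> \<le> (\<Sum>u\<in>preds w \<inter> Splus. nstep_plus A (n + m) y u * trans_prob A u w)"
      by (intro sum_mono mult_right_mono Suc trans_prob_nonneg[OF assms])
    also have "\<dots> = nstep_plus A (n + Suc m) y w"
      using True by simp
    finally show ?thesis .
  qed
qed

lemma nstep_plus_mult_qtilde_le:
  assumes "valid_blocks A"
  shows "ennreal (nstep_plus A n y v) * qtilde A v w \<le> qtilde A y w"
proof -
  have "ennreal (nstep_plus A n y v) * qtilde A v w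
      = (\<Sum>m. ennreal (nstep_plus A n y v * nstep_plus A m v w))"
    unfolding qtilde_def by (simp add: ennreal_mult nstep_plus_nonneg[OF assms])
  also have "\<dots> \<le> (\<Sum>m. ennreal (nstep_plus A (m + n) y w))"
    using nstep_plus_mult_le[OF assms, of n y v]
    by (intro suminf_le ennreal_leI) (auto simp: add.commute)
  also have "\<dots> \<le> qtilde A y w"
    unfolding qtilde_def by (subst (2) suminf_offset[of _ n]) auto
  finally show ?thesis .
qed

lemma ennreal_power_series_cmult_le:
  fixes a b :: "nat \<Rightarrow> ennreal"
  assumes "\<And>k. c * a k \<le> b k"
  shows "c * (\<Sum>k. a k * z ^ k) \<le> (\<Sum>k. b k * z ^ k)"
  using assms
  by (simp flip: ennreal_suminf_cmult add: mult.assoc[symmetric])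
    (intro suminf_le mult_right_mono; auto)

lemma Sup_finite_radius_mono:
  fixes f g :: "ennreal \<Rightarrow> ennreal"
  assumes "0 < c" and "\<And>z. ennreal c * g z \<le> f z"
  shows "Sup {ennreal r | r. 0 \<le> r \<and> f (ennreal r) < top}
       \<le> Sup {ennreal r | r. 0 \<le> r \<and> g (ennreal r) < top}"
proof (rule Sup_subset_mono, safe)
  fix r :: real
  assume "0 \<le> r" and f_fin: "f (ennreal r) < top"
  have "g (ennreal r) < top"
  proof (rule ccontr)
    assume "\<not> g (ennreal r) < top"
    then have "ennreal c * g (ennreal r) = top"
      using \<open>0 < c\<close> by (simp add: less_top[symmetric] ennreal_mult_top)
    then show False
      using assms(2)[of "ennreal r"] f_fin by (simp add: top_unique)
  qed
  with \<open>0 \<le> r\<close> show "\<exists>r'. ennreal r = ennreal r' \<and> 0 \<le> r' \<and> g (ennreal r') < top"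
    by blast
qed

lemma radii_le_if_reachable:
  assumes "valid_blocks A" and reach: "0 < nstep_plus A n y v"
  shows "r1 A y x j \<le> r1 A v x j" and "r2 A y x j \<le> r2 A v x j"
  unfolding r1_def r2_def phi1_def phi2_def
  by (rule Sup_finite_radius_mono[OF reach],
      rule ennreal_power_series_cmult_le, rule nstep_plus_mult_qtilde_le[OF assms(1)])+

theorem proposition4p1:
  fixes A :: "int \<Rightarrow> int \<Rightarrow> 'j::finite \<Rightarrow> 'j \<Rightarrow> real"
    and \<pi> :: "'j \<Rightarrow> real"
  assumes "valid_blocks A"
    and "irreducible_chain A"
    and "aperiodic_chain A"
    and "stationary_dist A \<pi>"
    and "drift1 A \<pi> < 0 \<or> drift2 A \<pi> < 0"
    and "irreducible_plus A"
  shows "\<forall>y\<in>Splus. \<forall>y'\<in>Splus. \<forall>k::int. \<forall>l::'j. 0 \<le> k \<longrightarrow>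
           r1 A y k l = r1 A y' k l \<and> r2 A y k l = r2 A y' k l"
proof (intro ballI allI impI)
  fix y y' :: "'j st" and k :: int and l :: 'j
  assume "y \<in> Splus" and "y' \<in> Splus"
  then obtain n n' where "0 < nstep_plus A n y y'" and "0 < nstep_plus A n' y' y"
    using assms(6) unfolding irreducible_plus_def by blast
  then show "r1 A y k l = r1 A y' k l \<and> r2 A y k l = r2 A y' k l"
    using radii_le_if_reachable[OF assms(1)] by (meson order.antisym)
qed

end
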